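(* Let $G$ be a group with finite generating set $S$, let $\Gamma$ be a tileset graph for $(G,S)$ and let $Y$ be a non-empty skeletal subset. Then $X=Y\cap X_\Gamma$ is non-empty if and only if there is a bi-infinite $\Gamma$-snake $(\omega,\zeta)$ with $d\omega\in Y$. In addition, if $Y$ is an effective (resp. sofic) subshift, then $X$ is an effective (resp. sofic) subshift.
   Context: Elements of $G$ are represented by words over the alphabet $S\cup S^{-1}$; $\overline{w}$ denotes the element represented by $w$. A tileset graph for $(G,S)$ is a finite multigraph $\Gamma=(A,B)$ whose edges are triples $(a,a',s)$ with $a,a'\in A$, $s\in S\cup S^{-1}$ (from $a$ to $a'$, labeled $s$), such that $(a,a',s)\in B$ implies $(a',a,s^{-1})\in B$. A bi-infinite $\Gamma$-snake is a pair $(\omega,\zeta)$ with $\omega:\mathbb{Z}\to G$ injective and $\zeta:\mathbb{Z}\to A$ such that for all $i$, $d\omega_i:=\omega(i)^{-1}\omega(i+1)\in S\cup S^{-1}$ and $(\zeta(i),\zeta(i+1),d\omega_i)\in B$; $d\omega$ denotes the sequence $(d\omega_i)_{i\in\mathbb{Z}}\in (S\cup S^{-1})^{\mathbb{Z}}$. For a finite alphabet $\mathcal{A}$, a subshift is a set $X_{\mathcal F}\subseteq\mathcal{A}^{\mathbb{Z}}$ of all sequences in which no word of a set $\mathcal{F}$ of forbidden finite words appears; it is sofic if $\mathcal F$ can be taken regular and effective if $\mathcal F$ can be taken decidable. The skeleton subshift $X_{G,S}\subseteq (S\cup S^{-1})^{\mathbb{Z}}$ is the set of sequences none of whose non-empty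 finite factors represents $1_G$. A skeletal subset is a shift-invariant subset $Y\subseteq X_{G,S}$ (shift $\sigma(x)_i=x_{i+1}$). $X_\Gamma\subseteq(S\cup S^{-1})^{\mathbb{Z}}$ is the set of label sequences of bi-infinite paths in $\Gamma$. *)

theory Defs
  imports "HOL-Algebra.Generated_Groups" "HOL-Library.Nat_Bijection"
begin

definition alph :: "('g, 'b) monoid_scheme \<Rightarrow> 'g set \<Rightarrow> 'g set" where
  "alph G S = S \<union> (\<lambda>s. inv\<^bsub>G\<^esub> s) ` S"

definition word_val :: "('g, 'b) monoid_scheme \<Rightarrow> 'g list \<Rightarrow> 'g" where
  "word_val G w = foldr (\<lambda>a b. a \<otimes>\<^bsub>G\<^esub> b) w \<one>\<^bsub>G\<^esub>"

definition factor :: "(int \<Rightarrow> 'c) \<Rightarrow> int \<Rightarrow> nat \<Rightarrow> 'c list" where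
  "factor x i n = map (\<lambda>k. x (i + int k)) [0..<n]"

definition shift :: "(int \<Rightarrow> 'c) \<Rightarrow> (int \<Rightarrow> 'c)" where
  "shift x = (\<lambda>i. x (i + 1))"

definition skeleton :: "('g, 'b) monoid_scheme \<Rightarrow> 'g set \<Rightarrow> (int \<Rightarrow> 'g) set" where
  "skeleton G S = {x. (\<forall>i. x i \<in> alph G S) \<and>
      (\<forall>i n. n > 0 \<longrightarrow> word_val G (factor x i n) \<noteq> \<one>\<^bsub>G\<^esub>)}"

definition skeletal :: "('g, 'b) monoid_scheme \<Rightarrow> 'g set \<Rightarrow> (int \<Rightarrow> 'g) set \<Rightarrow> bool" where
  "skeletal G S Y \<longleftrightarrow> Y \<subseteq> skeleton G S \<and> shift ` Y = Y"

definition tileset_graph ::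
  "('g, 'b) monoid_scheme \<Rightarrow> 'g set \<Rightarrow> 'a set \<Rightarrow> ('a \<times> 'a \<times> 'g) set \<Rightarrow> bool" where
  "tileset_graph G S A B \<longleftrightarrow> finite A \<and> B \<subseteq> A \<times> A \<times> alph G S \<and>
     (\<forall>a a' s. (a, a', s) \<in> B \<longrightarrow> (a', a, inv\<^bsub>G\<^esub> s) \<in> B)"

definition dw :: "('g, 'b) monoid_scheme \<Rightarrow> (int \<Rightarrow> 'g) \<Rightarrow> (int \<Rightarrow> 'g)" where
  "dw G \<omega> = (\<lambda>i. inv\<^bsub>G\<^esub> (\<omega> i) \<otimes>\<^bsub>G\<^esub> \<omega> (i + 1))"

definition snake ::
  "('g, 'b) monoid_scheme \<Rightarrow> 'g set \<Rightarrow> ('a \<times> 'a \<times> 'g) set \<Rightarrow> (int \<Rightarrow> 'g) \<Rightarrow> (int \<Rightarrow> 'a) \<Rightarrow> bool" where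
  "snake G S B \<omega> \<zeta> \<longleftrightarrow> inj \<omega> \<and> (\<forall>i. \<omega> i \<in> carrier G) \<and>
     (\<forall>i. dw G \<omega> i \<in> alph G S \<and> (\<zeta> i, \<zeta> (i + 1), dw G \<omega> i) \<in> B)"

definition X_graph :: "('a \<times> 'a \<times> 'g) set \<Rightarrow> (int \<Rightarrow> 'g) set" where
  "X_graph B = {x. \<exists>\<zeta>. \<forall>i. (\<zeta> i, \<zeta> (i + 1), x i) \<in> B}"

definition occurs :: "'c list \<Rightarrow> (int \<Rightarrow> 'c) \<Rightarrow> bool" where
  "occurs w x \<longleftrightarrow> (\<exists>i. factor x i (length w) = w)"

definition X_forb :: "'c set \<Rightarrow> 'c list set \<Rightarrow> (int \<Rightarrow> 'c) set" where
  "X_forb Al F = {x. (\<forall>i. x i \<in> Al) \<and> (\<forall>w\<in>F. \<not> occurs w x)}"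

definition regular_lang :: "'c set \<Rightarrow> 'c list set \<Rightarrow> bool" where
  "regular_lang Al L \<longleftrightarrow> L \<subseteq> lists Al \<and>
    (\<exists>(Q :: nat set) q0 \<delta> Fin. finite Q \<and> q0 \<in> Q \<and> Fin \<subseteq> Q \<and>
       (\<forall>q\<in>Q. \<forall>a\<in>Al. \<delta> q a \<in> Q) \<and>
       L = {w \<in> lists Al. foldl \<delta> q0 w \<in> Fin})"

datatype recf = Zero | Succ | Proj nat | Comp recf "recf list" | Prim recf recf | Mu recf

inductive eval_recf :: "recf \<Rightarrow> nat list \<Rightarrow> nat \<Rightarrow> bool" where
  zero: "eval_recf Zero xs 0"
| succ: "eval_recf Succ (x # xs) (Suc x)"
| proj: "i < length xs \<Longrightarrow> eval_recf (Proj i) xs (xs ! i)"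
| comp: "list_all2 (\<lambda>g y. eval_recf g xs y) gs ys \<Longrightarrow> eval_recf f ys z \<Longrightarrow>
           eval_recf (Comp f gs) xs z"
| prim0: "eval_recf f xs z \<Longrightarrow> eval_recf (Prim f g) (0 # xs) z"
| primS: "eval_recf (Prim f g) (n # xs) y \<Longrightarrow> eval_recf g (n # y # xs) z \<Longrightarrow>
           eval_recf (Prim f g) (Suc n # xs) z"
| mu: "eval_recf f (n # xs) 0 \<Longrightarrow> (\<forall>m<n. \<exists>y>0. eval_recf f (m # xs) y) \<Longrightarrow>
           eval_recf (Mu f) xs n"

definition decidable_nat_set :: "nat set \<Rightarrow> bool" where
  "decidable_nat_set D \<longleftrightarrow> (\<exists>f. \<forall>n. eval_recf f [n] (if n \<in> D then 1 else 0))"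

definition decidable_lang :: "'c set \<Rightarrow> 'c list set \<Rightarrow> bool" where
  "decidable_lang Al L \<longleftrightarrow> L \<subseteq> lists Al \<and>
    (\<exists>e. bij_betw e Al {..<card Al} \<and> decidable_nat_set (list_encode ` map e ` L))"

definition sofic_subshift :: "'c set \<Rightarrow> (int \<Rightarrow> 'c) set \<Rightarrow> bool" where
  "sofic_subshift Al X \<longleftrightarrow> (\<exists>F. regular_lang Al F \<and> X = X_forb Al F)"

definition effective_subshift :: "'c set \<Rightarrow> (int \<Rightarrow> 'c) set \<Rightarrow> bool" where
  "effective_subshift Al X \<longleftrightarrow> (\<exists>F. decidable_lang Al F \<and> X = X_forb Al F)"

end

theory Submission
  imports Defs
begin

text \<open>A skeleton sequence \<open>x\<close> integrates to its sequence of partial products \<open>\<omega>\<close>, with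
  \<open>d\<omega> = x\<close>; \<open>\<omega>\<close> is injective exactly because no non-empty factor of \<open>x\<close> represents \<open>1\<close>.
  Hence a bi-infinite path of \<open>\<Gamma>\<close> labelled by a point of \<open>Y\<close> is the same thing as a snake
  along that point.

  By compactness (\<open>\<Gamma>\<close> is finite), \<open>X\<^sub>\<Gamma>\<close> is the subshift whose forbidden words are the
  words labelling no path of \<open>\<Gamma>\<close>. The subset automaton of \<open>\<Gamma>\<close> recognises them, so they form
  a regular language, and a regular language is decidable because a \<open>\<mu>\<close>-recursive function can run
  the automaton on the code of a word. Forbidding these words in addition to those of \<open>Y\<close>
  therefore preserves soficity and effectiveness.\<close>

section \<open>Snakes from skeleton sequences\<close>

lemma length_factor [simp]: "length (factor x i n) = n"
  by (simp add: factor_def)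

lemma nth_factor [simp]: "k < n \<Longrightarrow> factor x i n ! k = x (i + int k)"
  by (simp add: factor_def)

lemma factor_Suc: "factor x i (Suc n) = factor x i n @ [x (i + int n)]"
  by (simp add: factor_def)

context group
begin

lemma alph_subset_carrier: "S \<subseteq> carrier G \<Longrightarrow> alph G S \<subseteq> carrier G"
  by (auto simp: alph_def)

lemma word_val_closed: "set w \<subseteq> carrier G \<Longrightarrow> word_val G w \<in> carrier G"
  by (induction w) (auto simp: word_val_def)

lemma word_val_snoc:
  "set w \<subseteq> carrier G \<Longrightarrow> a \<in> carrier G \<Longrightarrow> word_val G (w @ [a]) = word_val G w \<otimes> a"
proof (induction w)
  case Nil then show ?case by (simp add: word_val_def)
next
  case (Cons b w)
  then show ?case using word_val_closed[of w] by (simp add: word_val_def m_assoc)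
qed

lemma obtain_partial_products:
  fixes x :: "int \<Rightarrow> 'a"
  assumes "\<And>i. x i \<in> carrier G"
  obtains \<omega> where "\<And>i. \<omega> i \<in> carrier G" and "\<And>i. \<omega> (i + 1) = \<omega> i \<otimes> x i"
proof -
  define fw where "fw = rec_nat \<one> (\<lambda>k g. g \<otimes> x (int k))"
  define bw where "bw = rec_nat \<one> (\<lambda>k g. g \<otimes> inv (x (- int k - 1)))"
  define \<omega> where "\<omega> i = (if 0 \<le> i then fw (nat i) else bw (nat (- i)))" for i
  have fw: "fw k \<in> carrier G" and bw: "bw k \<in> carrier G" for k
    by (induction k) (simp_all add: fw_def bw_def assms)
  have closed: "\<omega> i \<in> carrier G" for i using fw bw by (simp add: \<omega>_def)
  have step: "\<omega> (i + 1) = \<omega> i \<otimes> x i" for i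
  proof (cases "0 \<le> i")
    case True
    then have "nat (i + 1) = Suc (nat i)" by simp
    with True show ?thesis by (simp add: \<omega>_def fw_def)
  next
    case False
    define k where "k = nat (- i - 1)"
    have i: "i = - int k - 1" and "nat (- i) = Suc k" using False by (simp_all add: k_def)
    then have "\<omega> i \<otimes> x i = bw k \<otimes> inv (x i) \<otimes> x i" by (simp add: \<omega>_def bw_def)
    also have "\<dots> = bw k" using bw assms by (simp add: m_assoc)
    also have "\<dots> = \<omega> (i + 1)"
      using i by (cases k) (simp_all add: \<omega>_def fw_def bw_def nat_add_distrib)
    finally show ?thesis by simp
  qed
  show ?thesis using closed step by (rule that)
qed

lemma partial_products_factor:
  assumes "\<And>i. \<omega> i \<in> carrier G" and "\<And>i. x i \<in> carrier G"
    and "\<And>i. \<omega> (i + 1) = \<omega> i \<otimes> x i"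
  shows "\<omega> (i + int n) = \<omega> i \<otimes> word_val G (factor x i n)"
proof (induction n)
  case 0 show ?case using assms(1) by (simp add: factor_def word_val_def)
next
  case (Suc n)
  have fc: "set (factor x i n) \<subseteq> carrier G" using assms(2) by (auto simp: factor_def)
  have "\<omega> (i + int (Suc n)) = \<omega> (i + int n) \<otimes> x (i + int n)"
    using assms(3)[of "i + int n"] by (simp add: algebra_simps)
  also have "\<dots> = \<omega> i \<otimes> word_val G (factor x i (Suc n))"
    using Suc fc assms(1,2) word_val_closed[OF fc]
    by (simp add: factor_Suc word_val_snoc m_assoc)
  finally show ?case .
qed

text \<open>The partial products of a skeleton sequence never repeat, since a repetition
  \<open>\<omega> i = \<omega> (i + n)\<close> exhibits a factor of length \<open>n\<close> representing \<open>\<one>\<close>.\<close>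
lemma snake_of_skeleton:
  assumes "S \<subseteq> carrier G" and x: "x \<in> skeleton G S"
    and \<zeta>: "\<And>i. (\<zeta> i, \<zeta> (i + 1), x i) \<in> B"
  shows "\<exists>\<omega>. snake G S B \<omega> \<zeta> \<and> dw G \<omega> = x"
proof -
  have xa: "x i \<in> alph G S" for i using x unfolding skeleton_def by blast
  then have xc: "x i \<in> carrier G" for i using alph_subset_carrier[OF assms(1)] by blast
  obtain \<omega> where \<omega>c: "\<And>i. \<omega> i \<in> carrier G" and \<omega>: "\<And>i. \<omega> (i + 1) = \<omega> i \<otimes> x i"
    using obtain_partial_products[of x, OF xc] by blast
  have no_return: "\<omega> i \<noteq> \<omega> (i + int n)" if "n > 0" for i n
  proof
    assume "\<omega> i = \<omega> (i + int n)"
    moreover have "set (factor x i n) \<subseteq> carrier G" using xc by (auto simp: factor_def)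
    ultimately have "word_val G (factor x i n) = \<one>"
      using partial_products_factor[of \<omega> x, OF \<omega>c xc \<omega>] \<omega>c word_val_closed by simp
    with x \<open>n > 0\<close> show False unfolding skeleton_def by blast
  qed
  have "\<omega> i \<noteq> \<omega> j" if "i < j" for i j
    using no_return[of "nat (j - i)" i] that by simp
  then have "inj \<omega>"
    by (metis injI linorder_neqE)
  moreover have dw: "dw G \<omega> = x"
    using \<omega>c xc by (simp add: dw_def \<omega> m_assoc[symmetric] fun_eq_iff)
  ultimately have "snake G S B \<omega> \<zeta>"
    unfolding snake_def dw using \<omega>c xa \<zeta> by blast
  with dw show ?thesis by blast
qed

end

section \<open>Paths in the tileset graph\<close>

definition successors :: "('a \<times> 'a \<times> 'g) set \<Rightarrow> 'a set \<Rightarrow> 'g \<Rightarrow> 'a set" where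
  "successors B V c = {b. \<exists>a\<in>V. (a, b, c) \<in> B}"

definition nonpath_words :: "'g set \<Rightarrow> 'a set \<Rightarrow> ('a \<times> 'a \<times> 'g) set \<Rightarrow> 'g list set" where
  "nonpath_words Al A B = {w \<in> lists Al. foldl (successors B) A w = {}}"

lemma mem_foldl_successors_iff:
  "b \<in> foldl (successors B) V w \<longleftrightarrow>
    (\<exists>\<zeta>. \<zeta> 0 \<in> V \<and> \<zeta> (length w) = b \<and> (\<forall>k<length w. (\<zeta> k, \<zeta> (Suc k), w ! k) \<in> B))"
proof (induction w arbitrary: V)
  case Nil
  then show ?case by auto
next
  case (Cons c w)
  show ?case
  proof
    assume "b \<in> foldl (successors B) V (c # w)"
    then obtain \<zeta> where \<zeta>: "\<zeta> 0 \<in> successors B V c" "\<zeta> (length w) = b"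
      "\<forall>k<length w. (\<zeta> k, \<zeta> (Suc k), w ! k) \<in> B"
      using Cons.IH by auto
    then obtain a where "a \<in> V" "(a, \<zeta> 0, c) \<in> B" by (auto simp: successors_def)
    with \<zeta> show "\<exists>\<eta>. \<eta> 0 \<in> V \<and> \<eta> (length (c # w)) = b \<and>
        (\<forall>k<length (c # w). (\<eta> k, \<eta> (Suc k), (c # w) ! k) \<in> B)"
      by (intro exI[of _ "case_nat a \<zeta>"]) (auto simp: less_Suc_eq_0_disj)
  next
    assume "\<exists>\<zeta>. \<zeta> 0 \<in> V \<and> \<zeta> (length (c # w)) = b \<and>
        (\<forall>k<length (c # w). (\<zeta> k, \<zeta> (Suc k), (c # w) ! k) \<in> B)"
    then obtain \<zeta> where "\<zeta> 0 \<in> V" "\<zeta> (Suc (length w)) = b"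
      "\<forall>k<Suc (length w). (\<zeta> k, \<zeta> (Suc k), (c # w) ! k) \<in> B"
      by auto
    then have "\<zeta> 1 \<in> successors B V c" and "\<forall>k<length w. (\<zeta> (Suc k), \<zeta> (Suc (Suc k)), w ! k) \<in> B"
      by (force simp: successors_def)+
    with \<open>\<zeta> (Suc (length w)) = b\<close> show "b \<in> foldl (successors B) V (c # w)"
      using Cons.IH[of "successors B V c"] by (auto intro!: exI[of _ "\<lambda>k. \<zeta> (Suc k)"])
  qed
qed

lemma finite_antimono_witness:
  assumes "finite A" and "\<And>n. \<exists>a\<in>A. P a (n::nat)" and "\<And>a m n. m \<le> n \<Longrightarrow> P a n \<Longrightarrow> P a m"
  shows "\<exists>a\<in>A. \<forall>n. P a n"
proof (rule ccontr)
  assume "\<not> ?thesis"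
  then obtain N where N: "\<forall>a\<in>A. \<not> P a (N a)" by metis
  obtain a where a: "a \<in> A" "P a (Max (N ` A))" using assms(2) by blast
  have "N a \<le> Max (N ` A)" using a(1) assms(1) by simp
  with a N assms(3) show False by blast
qed

lemma bi_infinite_chain:
  assumes "V 0 a0"
    and fw: "\<And>i a. V i a \<Longrightarrow> \<exists>b. V (i + 1) b \<and> R i a b"
    and bw: "\<And>i b. V (i + 1) b \<Longrightarrow> \<exists>a. V i a \<and> R i a b"
  shows "\<exists>\<zeta>. \<forall>i::int. R i (\<zeta> i) (\<zeta> (i + 1))"
proof -
  have "\<exists>f. \<forall>n. (V (int n) (f n) \<and> (n = 0 \<longrightarrow> f n = a0)) \<and> R (int n) (f n) (f (Suc n))"
  proof (rule dependent_nat_choice)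
    fix a n assume "V (int n) a \<and> (n = 0 \<longrightarrow> a = a0)"
    then show "\<exists>b. (V (int (Suc n)) b \<and> (Suc n = 0 \<longrightarrow> b = a0)) \<and> R (int n) a b"
      using fw[of "int n" a] by (simp add: add.commute)
  qed (use assms(1) in auto)
  then obtain f where f: "\<And>n. V (int n) (f n)" "f 0 = a0" "\<And>n. R (int n) (f n) (f (Suc n))"
    by blast
  have "\<exists>g. \<forall>n. (V (- int n) (g n) \<and> (n = 0 \<longrightarrow> g n = a0)) \<and> R (- int n - 1) (g (Suc n)) (g n)"
  proof (rule dependent_nat_choice)
    fix b n assume "V (- int n) b \<and> (n = 0 \<longrightarrow> b = a0)"
    then obtain a where "V (- int n - 1) a" "R (- int n - 1) a b"
      using bw[of "- int n - 1" b] by auto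
    moreover have "- int (Suc n) = - int n - 1" by simp
    ultimately show "\<exists>a. (V (- int (Suc n)) a \<and> (Suc n = 0 \<longrightarrow> a = a0)) \<and> R (- int n - 1) a b"
      by (metis Zero_not_Suc)
  qed (use assms(1) in auto)
  then obtain g where g: "g 0 = a0" "\<And>n. R (- int n - 1) (g (Suc n)) (g n)"
    by blast
  define \<zeta> where "\<zeta> i = (if 0 \<le> i then f (nat i) else g (nat (- i)))" for i
  have "R i (\<zeta> i) (\<zeta> (i + 1))" for i
  proof (cases "0 \<le> i")
    case True
    then have "nat (i + 1) = Suc (nat i)" by simp
    with True show ?thesis using f(3)[of "nat i"] by (simp add: \<zeta>_def)
  next
    case False
    define n where "n = nat (- i - 1)"
    have "i = - int n - 1" and "nat (- i) = Suc n" using False by (simp_all add: n_def)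
    then have "\<zeta> i = g (Suc n)" and "\<zeta> (i + 1) = g n"
      using f(2) g(1) by (simp_all add: \<zeta>_def)
    with \<open>i = - int n - 1\<close> show ?thesis using g(2)[of n] by simp
  qed
  then show ?thesis by blast
qed

definition centered_path :: "('a \<times> 'a \<times> 'g) set \<Rightarrow> (int \<Rightarrow> 'g) \<Rightarrow> int \<Rightarrow> 'a \<Rightarrow> nat \<Rightarrow> bool" where
  "centered_path B x i a n \<longleftrightarrow>
    (\<exists>\<zeta>. \<zeta> i = a \<and> (\<forall>j. i - int n \<le> j \<and> j < i + int n \<longrightarrow> (\<zeta> j, \<zeta> (j + 1), x j) \<in> B))"

lemma centered_path_mono:
  assumes "m \<le> n" and "centered_path B x i a n"
  shows "centered_path B x i a m"
proof -
  obtain \<zeta> where "\<zeta> i = a"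
    and \<zeta>: "\<And>j. i - int n \<le> j \<Longrightarrow> j < i + int n \<Longrightarrow> (\<zeta> j, \<zeta> (j + 1), x j) \<in> B"
    using assms(2) unfolding centered_path_def by blast
  moreover have "(\<zeta> j, \<zeta> (j + 1), x j) \<in> B" if "i - int m \<le> j" and "j < i + int m" for j
    using that assms(1) by (intro \<zeta>) linarith+
  ultimately show ?thesis unfolding centered_path_def by blast
qed

lemma centered_path_step_right:
  assumes "centered_path B x i a (Suc n)"
  shows "\<exists>b. (a, b, x i) \<in> B \<and> centered_path B x (i + 1) b n"
proof -
  obtain \<zeta> where "\<zeta> i = a"
    and \<zeta>: "\<And>j. i - int (Suc n) \<le> j \<Longrightarrow> j < i + int (Suc n) \<Longrightarrow> (\<zeta> j, \<zeta> (j + 1), x j) \<in> B"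
    using assms unfolding centered_path_def by blast
  have "(\<zeta> j, \<zeta> (j + 1), x j) \<in> B" if "i + 1 - int n \<le> j" and "j < i + 1 + int n" for j
    using that by (intro \<zeta>) simp_all
  then have "centered_path B x (i + 1) (\<zeta> (i + 1)) n" unfolding centered_path_def by blast
  moreover have "(a, \<zeta> (i + 1), x i) \<in> B" using \<zeta>[of i] \<open>\<zeta> i = a\<close> by simp
  ultimately show ?thesis by blast
qed

lemma centered_path_step_left:
  assumes "centered_path B x (i + 1) b (Suc n)"
  shows "\<exists>a. (a, b, x i) \<in> B \<and> centered_path B x i a n"
proof -
  obtain \<zeta> where "\<zeta> (i + 1) = b"
    and \<zeta>: "\<And>j. i + 1 - int (Suc n) \<le> j \<Longrightarrow> j < i + 1 + int (Suc n) \<Longrightarrow>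
      (\<zeta> j, \<zeta> (j + 1), x j) \<in> B"
    using assms unfolding centered_path_def by blast
  have "(\<zeta> j, \<zeta> (j + 1), x j) \<in> B" if "i - int n \<le> j" and "j < i + int n" for j
    using that by (intro \<zeta>) simp_all
  then have "centered_path B x i (\<zeta> i) n" unfolding centered_path_def by blast
  moreover have "(\<zeta> i, b, x i) \<in> B" using \<zeta>[of i] \<open>\<zeta> (i + 1) = b\<close> by simp
  ultimately show ?thesis by blast
qed

lemma centered_path_of_factor:
  assumes "foldl (successors B) V (factor x (i - int n) (2 * n)) \<noteq> {}"
  shows "\<exists>a. centered_path B x i a n"
proof -
  obtain \<eta> where "\<forall>k<2 * n. (\<eta> k, \<eta> (Suc k), factor x (i - int n) (2 * n) ! k) \<in> B"
    using assms unfolding ex_in_conv[symmetric] mem_foldl_successors_iff by auto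
  then have \<eta>: "\<And>k. k < 2 * n \<Longrightarrow> (\<eta> k, \<eta> (Suc k), x (i - int n + int k)) \<in> B"
    by simp
  define \<zeta> where "\<zeta> j = \<eta> (nat (j - (i - int n)))" for j
  have "(\<zeta> j, \<zeta> (j + 1), x j) \<in> B" if "i - int n \<le> j" and "j < i + int n" for j
  proof -
    define k where "k = nat (j - (i - int n))"
    have "k < 2 * n" and "j = i - int n + int k" and "nat (j + 1 - (i - int n)) = Suc k"
      using that by (simp_all add: k_def)
    then show ?thesis using \<eta>[of k] by (simp add: \<zeta>_def k_def[symmetric])
  qed
  then show ?thesis unfolding centered_path_def by blast
qed

lemma X_graph_subset_X_forb:
  assumes "B \<subseteq> A \<times> A \<times> Al"
  shows "X_graph B \<subseteq> X_forb Al (nonpath_words Al A B)"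
proof
  fix x assume "x \<in> X_graph B"
  then obtain \<zeta> where \<zeta>: "\<And>i. (\<zeta> i, \<zeta> (i + 1), x i) \<in> B" by (auto simp: X_graph_def)
  have "\<not> occurs w x" if "w \<in> nonpath_words Al A B" for w
  proof
    assume "occurs w x"
    then obtain i where w: "factor x i (length w) = w" by (auto simp: occurs_def)
    have "\<zeta> (i + int (length w)) \<in> foldl (successors B) A w"
      unfolding mem_foldl_successors_iff
    proof (intro exI[of _ "\<lambda>k. \<zeta> (i + int k)"] conjI allI impI)
      show "\<zeta> (i + int 0) \<in> A" using \<zeta>[of i] assms by auto
      show "(\<zeta> (i + int k), \<zeta> (i + int (Suc k)), w ! k) \<in> B" if "k < length w" for k
        using \<zeta>[of "i + int k"] nth_factor[OF that, of x i] w by (simp add: algebra_simps)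
    qed simp
    with that show False by (auto simp: nonpath_words_def)
  qed
  moreover have "x i \<in> Al" for i using \<zeta>[of i] assms by auto
  ultimately show "x \<in> X_forb Al (nonpath_words Al A B)" by (simp add: X_forb_def)
qed

lemma centered_paths_extend_right:
  assumes "finite A" and "B \<subseteq> A \<times> A \<times> Al" and "\<forall>n. centered_path B x i a n"
  shows "\<exists>b. (\<forall>n. centered_path B x (i + 1) b n) \<and> (a, b, x i) \<in> B"
proof -
  have "\<exists>b\<in>{b \<in> A. (a, b, x i) \<in> B}. \<forall>n. centered_path B x (i + 1) b n"
  proof (rule finite_antimono_witness)
    show "\<exists>b\<in>{b \<in> A. (a, b, x i) \<in> B}. centered_path B x (i + 1) b n" for n
      using centered_path_step_right[of B x i a n] assms(2,3) by blast
  qed (use assms(1) in simp, rule centered_path_mono)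
  then show ?thesis by blast
qed

lemma centered_paths_extend_left:
  assumes "finite A" and "B \<subseteq> A \<times> A \<times> Al" and "\<forall>n. centered_path B x (i + 1) b n"
  shows "\<exists>a. (\<forall>n. centered_path B x i a n) \<and> (a, b, x i) \<in> B"
proof -
  have "\<exists>a\<in>{a \<in> A. (a, b, x i) \<in> B}. \<forall>n. centered_path B x i a n"
  proof (rule finite_antimono_witness)
    show "\<exists>a\<in>{a \<in> A. (a, b, x i) \<in> B}. centered_path B x i a n" for n
      using centered_path_step_left[of B x i b n] assms(2,3) by blast
  qed (use assms(1) in simp, rule centered_path_mono)
  then show ?thesis by blast
qed

text \<open>Compactness: a vertex admitting paths of every length around position \<open>i\<close> extends by
  one edge in each direction to a vertex with the same property (Koenig's lemma).\<close>
lemma X_forb_subset_X_graph: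
  assumes A: "finite A" and BA: "B \<subseteq> A \<times> A \<times> Al"
  shows "X_forb Al (nonpath_words Al A B) \<subseteq> X_graph B"
proof
  fix x assume x: "x \<in> X_forb Al (nonpath_words Al A B)"
  have paths: "\<exists>a. centered_path B x i a n" for i n
  proof (rule centered_path_of_factor)
    let ?w = "factor x (i - int n) (2 * n)"
    have "?w \<in> lists Al" using x by (auto simp: X_forb_def factor_def)
    moreover have "occurs ?w x" by (auto simp: occurs_def)
    ultimately show "foldl (successors B) A ?w \<noteq> {}"
      using x by (auto simp: X_forb_def nonpath_words_def)
  qed
  have "\<exists>a\<in>A. \<forall>n. centered_path B x 0 a n"
  proof (rule finite_antimono_witness[OF A])
    fix n
    obtain a where a: "centered_path B x 0 a (Suc n)" using paths by blast
    then have "a \<in> A" using centered_path_step_right[OF a] BA by blast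
    with centered_path_mono[of n "Suc n", OF _ a] show "\<exists>a\<in>A. centered_path B x 0 a n" by auto
  qed (rule centered_path_mono)
  then obtain a0 where "\<forall>n. centered_path B x 0 a0 n" by blast
  then have "\<exists>\<zeta>. \<forall>i. (\<zeta> i, \<zeta> (i + 1), x i) \<in> B"
    using centered_paths_extend_right[OF A BA] centered_paths_extend_left[OF A BA]
    by (intro bi_infinite_chain[where V = "\<lambda>i a. \<forall>n. centered_path B x i a n"])
  then show "x \<in> X_graph B" by (simp add: X_graph_def)
qed

theorem X_graph_eq_X_forb:
  "finite A \<Longrightarrow> B \<subseteq> A \<times> A \<times> Al \<Longrightarrow> X_graph B = X_forb Al (nonpath_words Al A B)"
  by (intro equalityI X_graph_subset_X_forb X_forb_subset_X_graph)

section \<open>Regular languages\<close>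

lemma foldl_closed:
  "(\<And>q a. q \<in> Q \<Longrightarrow> a \<in> Al \<Longrightarrow> \<delta> q a \<in> Q) \<Longrightarrow> q \<in> Q \<Longrightarrow> w \<in> lists Al \<Longrightarrow> foldl \<delta> q w \<in> Q"
  by (induction w arbitrary: q) auto

text \<open>The states of the automaton need not be natural numbers.\<close>
lemma regular_langI:
  assumes Q: "finite Q" "q0 \<in> Q" "Fin \<subseteq> Q" and \<delta>: "\<And>q a. q \<in> Q \<Longrightarrow> a \<in> Al \<Longrightarrow> \<delta> q a \<in> Q"
  shows "regular_lang Al {w \<in> lists Al. foldl \<delta> q0 w \<in> Fin}"
proof -
  obtain idx where idx: "bij_betw idx Q {0..<card Q}"
    using ex_bij_betw_finite_nat[OF Q(1)] by blast
  define \<delta>' where "\<delta>' n a = idx (\<delta> (inv_into Q idx n) a)" for n a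
  have run: "foldl \<delta>' (idx q) w = idx (foldl \<delta> q w)" if "q \<in> Q" "w \<in> lists Al" for q w
    using that idx by (induction w arbitrary: q) (auto simp: \<delta>'_def bij_betw_def \<delta>)
  have "foldl \<delta> q0 w \<in> Fin \<longleftrightarrow> foldl \<delta>' (idx q0) w \<in> idx ` Fin" if "w \<in> lists Al" for w
    using run[OF Q(2) that] foldl_closed[of Q Al \<delta>, OF \<delta> Q(2) that] idx Q(3)
    by (metis bij_betw_def inj_on_image_mem_iff)
  then have "{w \<in> lists Al. foldl \<delta> q0 w \<in> Fin} = {w \<in> lists Al. foldl \<delta>' (idx q0) w \<in> idx ` Fin}"
    by blast
  moreover have "\<forall>n\<in>{0..<card Q}. \<forall>a\<in>Al. \<delta>' n a \<in> {0..<card Q}"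
  proof (intro ballI)
    fix n a assume "n \<in> {0..<card Q}" and "a \<in> Al"
    then have "inv_into Q idx n \<in> Q" using idx by (metis bij_betw_def inv_into_into)
    with idx \<delta> \<open>a \<in> Al\<close> show "\<delta>' n a \<in> {0..<card Q}"
      unfolding \<delta>'_def bij_betw_def by blast
  qed
  moreover have "idx q0 \<in> {0..<card Q}" and "idx ` Fin \<subseteq> {0..<card Q}"
    using idx Q by (auto simp: bij_betw_def)
  ultimately show ?thesis
    unfolding regular_lang_def by (intro conjI exI[of _ "{0..<card Q}"]) auto
qed

lemma regular_lang_Un:
  assumes "regular_lang Al L1" and "regular_lang Al L2"
  shows "regular_lang Al (L1 \<union> L2)"
proof -
  obtain Q1 :: "nat set" and q1 \<delta>1 F1 where Q1: "finite Q1" "q1 \<in> Q1" "F1 \<subseteq> Q1"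
    and \<delta>1: "\<forall>q\<in>Q1. \<forall>a\<in>Al. \<delta>1 q a \<in> Q1" and L1: "L1 = {w \<in> lists Al. foldl \<delta>1 q1 w \<in> F1}"
    using assms(1) unfolding regular_lang_def by blast
  obtain Q2 :: "nat set" and q2 \<delta>2 F2 where Q2: "finite Q2" "q2 \<in> Q2" "F2 \<subseteq> Q2"
    and \<delta>2: "\<forall>q\<in>Q2. \<forall>a\<in>Al. \<delta>2 q a \<in> Q2" and L2: "L2 = {w \<in> lists Al. foldl \<delta>2 q2 w \<in> F2}"
    using assms(2) unfolding regular_lang_def by blast
  define \<delta> where "\<delta> = (\<lambda>(p, q) a. (\<delta>1 p a, \<delta>2 q a))"
  have run: "foldl \<delta> (p, q) w = (foldl \<delta>1 p w, foldl \<delta>2 q w)" for p q w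
    by (induction w arbitrary: p q) (simp_all add: \<delta>_def)
  have "regular_lang Al {w \<in> lists Al. foldl \<delta> (q1, q2) w \<in> F1 \<times> Q2 \<union> Q1 \<times> F2}"
    using Q1 Q2 \<delta>1 \<delta>2 by (intro regular_langI[of "Q1 \<times> Q2"]) (auto simp: \<delta>_def)
  moreover have "{w \<in> lists Al. foldl \<delta> (q1, q2) w \<in> F1 \<times> Q2 \<union> Q1 \<times> F2} = L1 \<union> L2"
    using foldl_closed[of Q1 Al \<delta>1] foldl_closed[of Q2 Al \<delta>2] Q1 Q2 \<delta>1 \<delta>2
    by (auto simp: run L1 L2)
  ultimately show ?thesis by simp
qed

lemma successors_subset: "B \<subseteq> A \<times> A \<times> Al \<Longrightarrow> successors B V c \<subseteq> A"
  by (auto simp: successors_def)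

lemma regular_nonpath_words:
  assumes "finite A" and "B \<subseteq> A \<times> A \<times> Al"
  shows "regular_lang Al (nonpath_words Al A B)"
proof -
  have "nonpath_words Al A B = {w \<in> lists Al. foldl (successors B) A w \<in> {{}}}"
    by (simp add: nonpath_words_def)
  also have "regular_lang Al \<dots>"
    using assms successors_subset[OF assms(2)] by (intro regular_langI[of "Pow A"]) auto
  finally show ?thesis .
qed

section \<open>Computable functions\<close>

definition computable :: "nat \<Rightarrow> (nat list \<Rightarrow> nat) \<Rightarrow> bool" where
  "computable k g \<longleftrightarrow> (\<exists>f. \<forall>xs. length xs = k \<longrightarrow> eval_recf f xs (g xs))"

lemma computable_cong:
  "computable k g \<Longrightarrow> (\<And>xs. length xs = k \<Longrightarrow> g xs = h xs) \<Longrightarrow> computable k h"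
  unfolding computable_def by metis

lemma decidable_nat_set_iff_computable:
  "decidable_nat_set D \<longleftrightarrow> computable 1 (\<lambda>xs. of_bool (xs ! 0 \<in> D))"
proof -
  have "(\<forall>xs. length xs = 1 \<longrightarrow> P xs) \<longleftrightarrow> (\<forall>n. P [n])" for P :: "nat list \<Rightarrow> bool"
    by (auto simp: length_Suc_conv)
  then show ?thesis unfolding decidable_nat_set_def computable_def by simp
qed

lemma computable_zero: "computable k (\<lambda>_. 0)"
  unfolding computable_def by (blast intro: eval_recf.zero)

lemma computable_proj: "i < k \<Longrightarrow> computable k (\<lambda>xs. xs ! i)"
  unfolding computable_def by (blast intro: eval_recf.proj)

lemma computable_Suc: "computable 1 (\<lambda>xs. Suc (xs ! 0))"
  unfolding computable_def by (rule exI[of _ Succ]) (auto simp: length_Suc_conv intro: eval_recf.succ)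

lemma computable_comp:
  assumes "computable (length gs) h" and "\<forall>g\<in>set gs. computable k g"
  shows "computable k (\<lambda>xs. h (map (\<lambda>g. g xs) gs))"
proof -
  obtain fh where fh: "\<forall>ys. length ys = length gs \<longrightarrow> eval_recf fh ys (h ys)"
    using assms(1) unfolding computable_def by blast
  obtain F where F: "\<forall>g\<in>set gs. \<forall>xs. length xs = k \<longrightarrow> eval_recf (F g) xs (g xs)"
    using bchoice[OF assms(2)[unfolded computable_def]] by blast
  have "eval_recf (Comp fh (map F gs)) xs (h (map (\<lambda>g. g xs) gs))" if "length xs = k" for xs
  proof (rule eval_recf.comp)
    show "list_all2 (\<lambda>g y. eval_recf g xs y) (map F gs) (map (\<lambda>g. g xs) gs)"
      using F that by (simp add: list_all2_map1 list_all2_map2 list_all2_same)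
  qed (use fh in simp)
  then show ?thesis unfolding computable_def by blast
qed

lemma computable_comp1:
  "computable 1 (\<lambda>ys. h (ys ! 0)) \<Longrightarrow> computable k f \<Longrightarrow> computable k (\<lambda>xs. h (f xs))"
  using computable_comp[of "[f]" "\<lambda>ys. h (ys ! 0)" k] by simp

lemma computable_comp2:
  "computable 2 (\<lambda>ys. h (ys ! 0) (ys ! 1)) \<Longrightarrow> computable k f \<Longrightarrow> computable k g \<Longrightarrow>
    computable k (\<lambda>xs. h (f xs) (g xs))"
  using computable_comp[of "[f, g]" "\<lambda>ys. h (ys ! 0) (ys ! 1)" k] by (simp add: numeral_2_eq_2)

lemma computable_const: "computable k (\<lambda>_. c)"
proof (induction c)
  case 0 show ?case by (rule computable_zero)
next
  case (Suc c) show ?case by (rule computable_comp1[OF computable_Suc Suc])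
qed

primrec prim_rec :: "(nat list \<Rightarrow> nat) \<Rightarrow> (nat list \<Rightarrow> nat) \<Rightarrow> nat \<Rightarrow> nat list \<Rightarrow> nat" where
  "prim_rec f g 0 xs = f xs"
| "prim_rec f g (Suc n) xs = g (n # prim_rec f g n xs # xs)"

lemma computable_prim_rec:
  assumes "computable k f" and "computable (Suc (Suc k)) g"
  shows "computable (Suc k) (\<lambda>xs. prim_rec f g (hd xs) (tl xs))"
proof -
  obtain rf rg where
    rf: "\<forall>xs. length xs = k \<longrightarrow> eval_recf rf xs (f xs)" and
    rg: "\<forall>xs. length xs = Suc (Suc k) \<longrightarrow> eval_recf rg xs (g xs)"
    using assms unfolding computable_def by blast
  have "eval_recf (Prim rf rg) (n # ys) (prim_rec f g n ys)" if "length ys = k" for n ys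
    by (induction n) (use rf rg that in \<open>auto intro: eval_recf.prim0 eval_recf.primS\<close>)
  then show ?thesis unfolding computable_def by (metis length_Suc_conv list.sel)
qed

lemma computable_nat_rec1:
  assumes "computable 2 (\<lambda>xs. g (xs ! 0) (xs ! 1))" and "\<And>n. h (Suc n) = g n (h n)"
  shows "computable 1 (\<lambda>xs. h (xs ! 0))"
proof -
  have "computable 1 (\<lambda>xs. prim_rec (\<lambda>_. h 0) (\<lambda>ys. g (ys ! 0) (ys ! 1)) (hd xs) (tl xs))"
    using computable_prim_rec[OF computable_const] assms(1) by (simp add: numeral_2_eq_2)
  moreover have "prim_rec (\<lambda>_. h 0) (\<lambda>ys. g (ys ! 0) (ys ! 1)) n [] = h n" for n
    by (induction n) (simp_all add: assms(2))
  ultimately show ?thesis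
    by (elim computable_cong) (auto simp: length_Suc_conv)
qed

lemma computable_nat_rec2:
  assumes "computable 1 (\<lambda>xs. h 0 (xs ! 0))"
    and "computable 3 (\<lambda>xs. g (xs ! 0) (xs ! 1) (xs ! 2))"
    and "\<And>n m. h (Suc n) m = g n (h n m) m"
  shows "computable 2 (\<lambda>xs. h (xs ! 0) (xs ! 1))"
proof -
  have "computable 2 (\<lambda>xs. prim_rec (\<lambda>ys. h 0 (ys ! 0)) (\<lambda>ys. g (ys ! 0) (ys ! 1) (ys ! 2))
      (hd xs) (tl xs))"
    using computable_prim_rec assms(1,2) by (simp add: numeral_2_eq_2 numeral_3_eq_3)
  moreover have "prim_rec (\<lambda>ys. h 0 (ys ! 0)) (\<lambda>ys. g (ys ! 0) (ys ! 1) (ys ! 2)) n [m] = h n m"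
    for n m by (induction n) (simp_all add: assms(3))
  ultimately show ?thesis
    by (elim computable_cong) (auto simp: length_Suc_conv numeral_2_eq_2)
qed

lemma computable_add:
  assumes "computable k f" and "computable k g"
  shows "computable k (\<lambda>xs. f xs + g xs)"
proof -
  have "computable 2 (\<lambda>xs. xs ! 0 + xs ! 1)"
  proof (rule computable_nat_rec2[of "(+)" "\<lambda>_ r _. Suc r"])
    show "computable 1 (\<lambda>xs. 0 + xs ! 0)" using computable_proj[of 0 1] by simp
    show "computable 3 (\<lambda>xs. Suc (xs ! 1))"
      by (rule computable_comp1[OF computable_Suc computable_proj]) simp
  qed simp
  from computable_comp2[OF this assms] show ?thesis .
qed

lemma computable_diff:
  assumes "computable k f" and "computable k g"
  shows "computable k (\<lambda>xs. f xs - g xs)"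
proof -
  have pred: "computable 1 (\<lambda>xs. xs ! 0 - 1)"
    by (rule computable_nat_rec1[of "\<lambda>n _. n"]) (simp_all add: computable_proj)
  have "computable 2 (\<lambda>xs. xs ! 1 - xs ! 0)"
  proof (rule computable_nat_rec2[of "\<lambda>n m. m - n" "\<lambda>_ r _. r - 1"])
    show "computable 3 (\<lambda>xs. xs ! 1 - 1)"
      by (rule computable_comp1[OF pred computable_proj]) simp
  qed (simp_all add: computable_proj)
  from computable_comp2[OF this assms(2,1)] show ?thesis .
qed

lemma computable_mult:
  assumes "computable k f" and "computable k g"
  shows "computable k (\<lambda>xs. f xs * g xs)"
proof -
  have "computable 2 (\<lambda>xs. xs ! 0 * xs ! 1)"
    by (rule computable_nat_rec2[of "(*)" "\<lambda>_ r m. r + m"])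
      (simp_all add: computable_const computable_add computable_proj)
  from computable_comp2[OF this assms] show ?thesis .
qed

lemma computable_le:
  assumes "computable k f" and "computable k g"
  shows "computable k (\<lambda>xs. of_bool (f xs \<le> g xs))"
  using computable_diff[OF computable_const computable_diff[OF assms], of 1]
  by (rule computable_cong) simp

lemma computable_eq:
  assumes "computable k f" and "computable k g"
  shows "computable k (\<lambda>xs. of_bool (f xs = g xs))"
  using computable_mult[OF computable_le[OF assms] computable_le[OF assms(2,1)]]
  by (rule computable_cong) auto

lemma computable_If:
  assumes "computable k (\<lambda>xs. of_bool (P xs))" and "computable k a" and "computable k b"
  shows "computable k (\<lambda>xs. if P xs then a xs else b xs)"
  using computable_add[OF computable_mult[OF assms(1,2)]
      computable_mult[OF computable_diff[OF computable_const assms(1)] assms(3)], of 1]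
  by (rule computable_cong) simp

lemma computable_lookup:
  assumes "finite D" and "computable k f"
  shows "computable k (\<lambda>xs. if f xs \<in> D then h (f xs) else 0)"
  using assms(1)
proof (induction D rule: finite_induct)
  case empty
  show ?case by (simp add: computable_const)
next
  case (insert d D)
  have "computable k (\<lambda>xs. if f xs = d then h d else if f xs \<in> D then h (f xs) else 0)"
    by (rule computable_If[OF computable_eq[OF assms(2) computable_const] computable_const insert.IH])
  then show ?case by (rule computable_cong) auto
qed

lemma computable_mem:
  assumes "finite D" and "computable k f"
  shows "computable k (\<lambda>xs. of_bool (f xs \<in> D))"
  using computable_lookup[OF assms, of "\<lambda>_. 1"] by (rule computable_cong) simp

text \<open>The index of the Cantor diagonal through \<open>n\<close>, i.e. the sum of the two components of
  \<open>prod_decode n\<close>; it increases right after the last point \<open>(d, 0)\<close> of a diagonal.\<close>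
primrec cantor_diag :: "nat \<Rightarrow> nat" where
  "cantor_diag 0 = 0"
| "cantor_diag (Suc n) =
    (if n - triangle (cantor_diag n) = cantor_diag n then Suc (cantor_diag n) else cantor_diag n)"

lemma cantor_diag_bounds:
  "triangle (cantor_diag n) \<le> n \<and> n - triangle (cantor_diag n) \<le> cantor_diag n"
  by (induction n) auto

lemma prod_decode_cantor_diag:
  "prod_decode n = (n - triangle (cantor_diag n), cantor_diag n - (n - triangle (cantor_diag n)))"
proof -
  define d where "d = cantor_diag n"
  have "n = triangle d + (n - triangle d)" and "n - triangle d \<le> d"
    using cantor_diag_bounds[of n] by (simp_all add: d_def)
  then have "prod_decode n = prod_decode_aux d (n - triangle d)"
    by (metis prod_decode_triangle_add)
  with \<open>n - triangle d \<le> d\<close> show ?thesis by (simp add: prod_decode_aux.simps d_def)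
qed

lemma computable_triangle: "computable 1 (\<lambda>xs. triangle (xs ! 0))"
  by (rule computable_nat_rec1[of "\<lambda>n r. r + Suc n"])
    (simp_all add: computable_add computable_comp1[OF computable_Suc] computable_proj)

lemma computable_cantor_diag: "computable 1 (\<lambda>xs. cantor_diag (xs ! 0))"
proof (rule computable_nat_rec1[of "\<lambda>n r. if n - triangle r = r then Suc r else r"])
  have p0: "computable 2 (\<lambda>xs. xs ! 0)" and p1: "computable 2 (\<lambda>xs. xs ! 1)"
    by (simp_all add: computable_proj)
  show "computable 2 (\<lambda>xs. if xs ! 0 - triangle (xs ! 1) = xs ! 1 then Suc (xs ! 1) else xs ! 1)"
    by (intro computable_If computable_eq computable_diff p0 p1
        computable_comp1[OF computable_triangle] computable_comp1[OF computable_Suc])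
qed simp

lemma computable_prod_decode:
  assumes "computable k f"
  shows "computable k (\<lambda>xs. fst (prod_decode (f xs)))"
    and "computable k (\<lambda>xs. snd (prod_decode (f xs)))"
proof -
  have d: "computable k (\<lambda>xs. f xs - triangle (cantor_diag (f xs)))"
    by (intro computable_diff assms computable_comp1[OF computable_triangle]
        computable_comp1[OF computable_cantor_diag])
  show "computable k (\<lambda>xs. fst (prod_decode (f xs)))"
    using d by (rule computable_cong) (simp add: prod_decode_cantor_diag[of "f _"])
  show "computable k (\<lambda>xs. snd (prod_decode (f xs)))"
    using computable_diff[OF computable_comp1[OF computable_cantor_diag assms] d]
    by (rule computable_cong) (simp add: prod_decode_cantor_diag[of "f _"])
qed

definition list_head :: "nat \<Rightarrow> nat" where
  "list_head n = fst (prod_decode (n - 1))"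

definition list_tail :: "nat \<Rightarrow> nat" where
  "list_tail n = snd (prod_decode (n - 1))"

lemma list_decode_eq_Nil_iff: "list_decode n = [] \<longleftrightarrow> n = 0"
  by (metis list_decode.simps(1) list_decode_inverse list_encode.simps(1))

lemma list_decode_head_tail:
  "n \<noteq> 0 \<Longrightarrow> list_decode n = list_head n # list_decode (list_tail n)"
  by (cases n) (simp_all add: list_head_def list_tail_def case_prod_beta)

lemma list_tail_0: "list_tail 0 = 0"
  by (simp add: list_tail_def prod_decode_def prod_decode_aux.simps)

lemma list_decode_funpow_tail: "list_decode ((list_tail ^^ k) n) = drop k (list_decode n)"
proof (induction k)
  case 0 show ?case by simp
next
  case (Suc k)
  show ?case
  proof (cases "(list_tail ^^ k) n = 0")
    case True
    then show ?thesis using Suc by (simp add: list_tail_0 drop_Suc tl_drop[symmetric])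
  next
    case False
    then show ?thesis using Suc list_decode_head_tail[OF False]
      by (simp add: drop_Suc tl_drop[symmetric]) (metis list.sel(3))
  qed
qed

lemma length_le_list_encode: "length ws \<le> list_encode ws"
  by (induction ws) (auto intro: le_SucI order.trans[OF _ le_prod_encode_2])

lemma length_list_decode_le: "length (list_decode n) \<le> n"
  using length_le_list_encode[of "list_decode n"] by simp

lemma computable_list_head: "computable k f \<Longrightarrow> computable k (\<lambda>xs. list_head (f xs))"
  unfolding list_head_def by (intro computable_prod_decode computable_diff computable_const)

lemma computable_list_tail: "computable k f \<Longrightarrow> computable k (\<lambda>xs. list_tail (f xs))"
  unfolding list_tail_def by (intro computable_prod_decode computable_diff computable_const)

lemma computable_funpow_list_tail: "computable 2 (\<lambda>xs. (list_tail ^^ (xs ! 0)) (xs ! 1))"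
  by (rule computable_nat_rec2[of "\<lambda>k. list_tail ^^ k" "\<lambda>_ r _. list_tail r"])
    (simp_all add: computable_proj computable_list_tail)


lemma take_Suc_list_decode:
  "take (Suc k) (list_decode n) =
    (if (list_tail ^^ k) n = 0 then take k (list_decode n)
     else take k (list_decode n) @ [list_head ((list_tail ^^ k) n)])"
  using take_add[of k 1 "list_decode n"] list_decode_funpow_tail[of k n]
    list_decode_head_tail[of "(list_tail ^^ k) n"]
  by (auto simp: list_decode_eq_Nil_iff)

text \<open>The run is computed by primitive recursion over the number of letters read; \<open>n\<close> steps
  suffice for the code \<open>n\<close>, since a list is no longer than its code.\<close>
lemma computable_foldl_list_decode:
  assumes "computable 2 (\<lambda>xs. \<delta> (xs ! 0) (xs ! 1))"
  shows "computable 1 (\<lambda>xs. foldl \<delta> q (list_decode (xs ! 0)))"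
proof -
  define run where "run k n = foldl \<delta> q (take k (list_decode n))" for k n
  have "computable 2 (\<lambda>xs. run (xs ! 0) (xs ! 1))"
  proof (rule computable_nat_rec2[of run "\<lambda>k r n. if (list_tail ^^ k) n = 0 then r
      else \<delta> r (list_head ((list_tail ^^ k) n))"])
    have tail: "computable 3 (\<lambda>xs. (list_tail ^^ (xs ! 0)) (xs ! 2))"
      by (rule computable_comp2[OF computable_funpow_list_tail]) (simp_all add: computable_proj)
    show "computable 3 (\<lambda>xs. if (list_tail ^^ (xs ! 0)) (xs ! 2) = 0 then xs ! 1
        else \<delta> (xs ! 1) (list_head ((list_tail ^^ (xs ! 0)) (xs ! 2))))"
      by (intro computable_If computable_eq tail computable_const computable_proj
          computable_comp2[OF assms] computable_list_head) simp_all
  qed (simp_all add: run_def take_Suc_list_decode computable_const)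
  then have "computable 1 (\<lambda>xs. run (xs ! 0) (xs ! 0))"
    by (rule computable_comp2) (simp_all add: computable_proj)
  then show ?thesis
    by (rule computable_cong) (simp add: run_def length_list_decode_le)
qed

lemma computable_prod_encode:
  assumes "computable k f" and "computable k g"
  shows "computable k (\<lambda>xs. prod_encode (f xs, g xs))"
  unfolding prod_encode_def
  by (simp add: computable_add computable_comp1[OF computable_triangle] assms)

lemma computable_finite_table:
  assumes "finite P"
  shows "computable 2 (\<lambda>xs. if (xs ! 0, xs ! 1) \<in> P then T (xs ! 0) (xs ! 1) else 0)"
proof -
  have "computable 2 (\<lambda>xs. if prod_encode (xs ! 0, xs ! 1) \<in> prod_encode ` P
      then case_prod T (prod_decode (prod_encode (xs ! 0, xs ! 1))) else 0)"
    using assms by (intro computable_lookup computable_prod_encode computable_proj) simp_all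
  then show ?thesis by (rule computable_cong) (simp add: inj_image_mem_iff[OF inj_prod_encode])
qed

lemma mem_list_encode_map_image_iff:
  assumes "bij_betw e Al C" and "L \<subseteq> lists Al"
  shows "n \<in> list_encode ` map e ` L \<longleftrightarrow>
    set (list_decode n) \<subseteq> C \<and> map (inv_into Al e) (list_decode n) \<in> L"
proof
  assume "n \<in> list_encode ` map e ` L"
  then obtain w where "w \<in> L" "n = list_encode (map e w)" by blast
  moreover from this have "w \<in> lists Al" using assms(2) by blast
  ultimately show "set (list_decode n) \<subseteq> C \<and> map (inv_into Al e) (list_decode n) \<in> L"
    using assms(1) by (auto simp: bij_betw_def map_idI)
next
  assume "set (list_decode n) \<subseteq> C \<and> map (inv_into Al e) (list_decode n) \<in> L"
  moreover from this have "map e (map (inv_into Al e) (list_decode n)) = list_decode n"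
    using assms(1) by (auto simp: bij_betw_def f_inv_into_f intro!: map_idI)
  ultimately show "n \<in> list_encode ` map e ` L" by (metis image_eqI list_decode_inverse)
qed

text \<open>The automaton is run on letter codes; state \<open>q\<close> is stored as \<open>Suc q\<close>, and \<open>0\<close> is a
  rejecting sink reached on codes outside the alphabet.\<close>
lemma regular_lang_decidable:
  assumes "regular_lang Al L" and e: "bij_betw e Al {..<M}"
  shows "decidable_nat_set (list_encode ` map e ` L)"
proof -
  obtain Q :: "nat set" and q0 \<delta> Fin where Q: "finite Q" "q0 \<in> Q" "Fin \<subseteq> Q"
    and \<delta>: "\<And>q a. q \<in> Q \<Longrightarrow> a \<in> Al \<Longrightarrow> \<delta> q a \<in> Q"
    and L: "L = {w \<in> lists Al. foldl \<delta> q0 w \<in> Fin}"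
    using assms(1) unfolding regular_lang_def by blast
  define d where "d = inv_into Al e"
  have d: "c < M \<Longrightarrow> d c \<in> Al" for c
    using e by (auto simp: d_def bij_betw_def intro: inv_into_into)
  define step where
    "step p c = (if (p, c) \<in> Suc ` Q \<times> {..<M} then Suc (\<delta> (p - 1) (d c)) else 0)" for p c
  have step_0: "foldl step 0 ws = 0" for ws
    by (induction ws) (auto simp: step_def)
  have run: "foldl step (Suc q) ws =
      (if set ws \<subseteq> {..<M} then Suc (foldl \<delta> q (map d ws)) else 0)" if "q \<in> Q" for q ws
    using that by (induction ws arbitrary: q) (auto simp: step_def step_0 \<delta> d)
  have mem: "n \<in> list_encode ` map e ` L \<longleftrightarrow> foldl step (Suc q0) (list_decode n) \<in> Suc ` Fin"
    for n
  proof (cases "set (list_decode n) \<subseteq> {..<M}")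
    case True
    then have "map d (list_decode n) \<in> lists Al" using d by (auto simp: subset_iff)
    with True show ?thesis
      using mem_list_encode_map_image_iff[OF e, of L] unfolding d_def[symmetric]
      by (auto simp: run[OF Q(2)] L inj_image_mem_iff)
  qed (auto simp: run[OF Q(2)] L mem_list_encode_map_image_iff[OF e])
  have "computable 2 (\<lambda>xs. step (xs ! 0) (xs ! 1))"
    unfolding step_def using Q(1) by (intro computable_finite_table) simp
  then have "computable 1 (\<lambda>xs. of_bool (foldl step (Suc q0) (list_decode (xs ! 0)) \<in> Suc ` Fin))"
    using Q(1,3) finite_subset by (intro computable_mem computable_foldl_list_decode) auto
  then show ?thesis
    unfolding decidable_nat_set_iff_computable mem .
qed

lemma decidable_nat_set_Un:
  assumes "decidable_nat_set D" and "decidable_nat_set E"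
  shows "decidable_nat_set (D \<union> E)"
proof -
  have "computable 1 (\<lambda>xs. if xs ! 0 \<in> D then 1 else of_bool (xs ! 0 \<in> E))"
    using assms unfolding decidable_nat_set_iff_computable by (intro computable_If computable_const)
  then show ?thesis unfolding decidable_nat_set_iff_computable by (rule computable_cong) simp
qed

section \<open>Subshifts\<close>

lemma X_forb_Int: "X_forb Al F \<inter> X_forb Al F' = X_forb Al (F \<union> F')"
  by (auto simp: X_forb_def)

lemma sofic_subshift_Int:
  assumes "sofic_subshift Al X" and "sofic_subshift Al X'"
  shows "sofic_subshift Al (X \<inter> X')"
proof -
  obtain F F' where "regular_lang Al F" "X = X_forb Al F" "regular_lang Al F'" "X' = X_forb Al F'"
    using assms unfolding sofic_subshift_def by blast
  then have "regular_lang Al (F \<union> F')" and "X \<inter> X' = X_forb Al (F \<union> F')"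
    by (simp_all add: regular_lang_Un X_forb_Int)
  then show ?thesis unfolding sofic_subshift_def by blast
qed

lemma effective_subshift_Int_sofic:
  assumes "effective_subshift Al X" and "sofic_subshift Al X'"
  shows "effective_subshift Al (X \<inter> X')"
proof -
  obtain F e where F: "F \<subseteq> lists Al" "decidable_nat_set (list_encode ` map e ` F)"
    and e: "bij_betw e Al {..<card Al}" and X: "X = X_forb Al F"
    using assms(1) unfolding effective_subshift_def decidable_lang_def by blast
  obtain F' where F': "regular_lang Al F'" and X': "X' = X_forb Al F'"
    using assms(2) unfolding sofic_subshift_def by blast
  have "decidable_lang Al (F \<union> F')"
    unfolding decidable_lang_def image_Un
    using F e F' decidable_nat_set_Un regular_lang_decidable[OF F' e]
    by (auto simp: regular_lang_def)
  then show ?thesis unfolding effective_subshift_def X X' X_forb_Int by blast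
qed

lemma sofic_subshift_X_graph:
  assumes "finite A" and "B \<subseteq> A \<times> A \<times> Al"
  shows "sofic_subshift Al (X_graph B)"
  unfolding sofic_subshift_def
  using regular_nonpath_words[OF assms] X_graph_eq_X_forb[OF assms] by blast

lemma (in group) Int_X_graph_nonempty_iff_snake:
  assumes "S \<subseteq> carrier G" and "Y \<subseteq> skeleton G S"
  shows "Y \<inter> X_graph B \<noteq> {} \<longleftrightarrow> (\<exists>\<omega> \<zeta>. snake G S B \<omega> \<zeta> \<and> dw G \<omega> \<in> Y)"
proof
  assume "Y \<inter> X_graph B \<noteq> {}"
  then obtain x \<zeta> where "x \<in> Y" and \<zeta>: "\<And>i. (\<zeta> i, \<zeta> (i + 1), x i) \<in> B"
    by (auto simp: X_graph_def)
  moreover from \<open>x \<in> Y\<close> have "x \<in> skeleton G S" using assms(2) by blast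
  ultimately show "\<exists>\<omega> \<zeta>. snake G S B \<omega> \<zeta> \<and> dw G \<omega> \<in> Y"
    using snake_of_skeleton[of S x \<zeta> B, OF assms(1) _ \<zeta>] by blast
next
  assume "\<exists>\<omega> \<zeta>. snake G S B \<omega> \<zeta> \<and> dw G \<omega> \<in> Y"
  then show "Y \<inter> X_graph B \<noteq> {}" unfolding snake_def X_graph_def by blast
qed

theorem proposition3:
  fixes G :: "('g, 'b) monoid_scheme" and S :: "'g set"
    and A :: "'a set" and B :: "('a \<times> 'a \<times> 'g) set" and Y :: "(int \<Rightarrow> 'g) set"
  assumes "group G" and "finite S" and "S \<subseteq> carrier G" and "generate G S = carrier G"
    and "tileset_graph G S A B"
    and "Y \<noteq> {}" and "skeletal G S Y"
  shows "(Y \<inter> X_graph B \<noteq> {} \<longleftrightarrow> (\<exists>\<omega> \<zeta>. snake G S B \<omega> \<zeta> \<and> dw G \<omega> \<in> Y))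
    \<and> (effective_subshift (alph G S) Y \<longrightarrow> effective_subshift (alph G S) (Y \<inter> X_graph B))
    \<and> (sofic_subshift (alph G S) Y \<longrightarrow> sofic_subshift (alph G S) (Y \<inter> X_graph B))"
proof -
  from assms(5) have "finite A" and "B \<subseteq> A \<times> A \<times> alph G S"
    unfolding tileset_graph_def by blast+
  then have sofic: "sofic_subshift (alph G S) (X_graph B)" by (rule sofic_subshift_X_graph)
  have "Y \<subseteq> skeleton G S" using assms(7) unfolding skeletal_def by blast
  then show ?thesis
    using group.Int_X_graph_nonempty_iff_snake[OF assms(1,3)]
      effective_subshift_Int_sofic[OF _ sofic] sofic_subshift_Int[OF _ sofic]
    by simp
qed

end
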